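(* Let $W=(\omega_1,\ldots,\omega_r)$ be a $C(x)$-vector space basis of $A$. Let $f=\frac{aW}{u}$ and $g=\frac{bW}{v}$ with $a,b\in C[x]^r$, $u,v\in C[x]$, where $\gcd$ of $u$ with the entries of $a$ is $1$ and $\gcd$ of $v$ with the entries of $b$ is $1$. Let $\alpha\in\bar C$, and suppose $f=\Delta g$ and $\operatorname{disp}_\alpha(v)\ge0$. (i) If $W$ is a local integral basis of $A$ at every point of $\alpha+\mathbb Z$, then $\operatorname{disp}_\alpha(u)\ge\operatorname{disp}_\alpha(v)+1$. (ii) Let $e\in C[x]$ and $M\in C[x]^{r\times r}$ with $SW=\frac1e MW$. Let $\beta\in\alpha+\mathbb Z$, suppose $W$ is a local integral basis of $A$ at $Z:=\{\eta\in\alpha+\mathbb Z\mid\eta\le\beta\}$ and that $\beta$ is the only possible root of $e$ in $\alpha+\mathbb Z$. Then $\operatorname{disp}_\alpha((x-\beta)u)\ge1$; i.e. $u$ has a root in $\alpha+\mathbb Z$ distinct from $\beta$.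
   Context: Let $C$ be a field of characteristic zero and $\bar C$ its algebraic closure; $\sigma(f)(x)=f(x+1)$ on $C(x)$, $C(x)[S]$ the Ore algebra with $Sf=\sigma(f)S$, $\Delta=S-1$. Fix $L=\sum_{i=0}^r\ell_iS^i\in C[x][S]$ with $\ell_0\ell_r\ne0$ and $A=C(x)[S]/C(x)[S]L$. For $\alpha\in\bar C$, operators $P=\sum p_iS^i$ act on $b:\alpha+\mathbb Z\to\bar C((q))$ by $(P\cdot b)(z)=\sum p_i(z+q)b(z+i)$; $\operatorname{Sol}_\alpha(L)=\{b: L\cdot b=0\}$; $\operatorname{val}_\alpha(f)=\min_{b\in\operatorname{Sol}_\alpha(L)}(\nu_q((f\cdot b)(\alpha))-\liminf_n\nu_q(b(\alpha-n)))$ ($\nu_q$ the $q$-adic valuation, $\infty-\infty=\infty$); $f$ is integral at $\alpha$ if $\operatorname{val}_\alpha(f)\ge0$; a local integral basis at $\alpha$ is a basis of the $C(x)_\alpha$-module of integral elements at $\alpha$, where $C(x)_\alpha=\{p/q:q(\alpha)\neq0\}$; a local integral basis at a set is one at each of its points. On $\alpha+\mathbb Z$, $\beta<\gamma$ means $\beta-\gamma$ is a negative integer. Notation: for $a=(a_1,\dots,a_r)\in C[x]^r$ and $u\in C[x]$, $\frac{aW}{u}=\frac1u\sum a_i\omega_i$, and $SW=(S\omega_1,\dots,S\omega_r)$. For $p\in C[x]$ and $\alpha\in\bar C$, the dispersion is $\operatorname{disp}_\alpha(p)=\max\{k\in\mathbb N\mid\exists\xi\in\alpha+\mathbb Z:\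 p(\xi)=p(\xi+k)=0\}$, with $\max\emptyset=-\infty$. *)

theory Defs
  imports "HOL-Computational_Algebra.Computational_Algebra"
          "HOL-Library.Extended_Real"
begin

(* Base field C = 'c (char 0), algebraic closure \bar C = 'k with       *)
(* embedding \<iota> : 'c \<Rightarrow> 'k.                                      *)

definition is_alg_closure :: "('c::field \<Rightarrow> 'k::field) \<Rightarrow> bool" where
  "is_alg_closure \<iota> \<longleftrightarrow>
     \<iota> 0 = 0 \<and> \<iota> 1 = 1 \<and> (\<forall>a b. \<iota> (a + b) = \<iota> a + \<iota> b) \<and>
     (\<forall>a b. \<iota> (a * b) = \<iota> a * \<iota> b) \<and> inj \<iota> \<and>
     (\<forall>p :: 'k poly. degree p \<ge> 1 \<longrightarrow> (\<exists>z. poly p z = 0)) \<and>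
     (\<forall>z :: 'k. \<exists>p :: 'c poly. p \<noteq> 0 \<and> poly (map_poly \<iota> p) z = 0)"

(* C(x) = 'c poly fract.  Elements of C(x)[S] are represented by their
   coefficient sequence as a ('c poly fract) poly (only used as a container
   for coefficients; Ore multiplication is defined by hand below). *)

definition sigma_rat :: "'c::{field_char_0,field_gcd} poly fract \<Rightarrow> 'c poly fract" where
  "sigma_rat f = (case quot_of_fract f of (n, d) \<Rightarrow>
      to_fract (pcompose n [:1, 1:]) / to_fract (pcompose d [:1, 1:]))"

(* L is given as an 'c poly poly : coefficient i is l_i \<in> C[x]; r = degree L *)
definition Lrat :: "'c::field_gcd poly poly \<Rightarrow> 'c poly fract poly" where
  "Lrat L = map_poly to_fract L"

(* A = C(x)[S] / C(x)[S] L, elements represented by the unique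
   representative of S-degree < r *)
definition in_A :: "'c::field_gcd poly poly \<Rightarrow> 'c poly fract poly \<Rightarrow> bool" where
  "in_A L F \<longleftrightarrow> (\<forall>i\<ge>degree L. coeff F i = 0)"

(* left multiplication by S in A :  S (sum p_i S^i) = sum sigma(p_i) S^(i+1),
   reduced modulo the left ideal C(x)[S] L *)
definition shiftS :: "'c::{field_char_0,field_gcd} poly poly \<Rightarrow> 'c poly fract poly \<Rightarrow> 'c poly fract poly" where
  "shiftS L F = (let G = pCons 0 (map_poly sigma_rat F) in
      G - smult (coeff G (degree L) / to_fract (lead_coeff L)) (Lrat L))"

definition DeltaA :: "'c::{field_char_0,field_gcd} poly poly \<Rightarrow> 'c poly fract poly \<Rightarrow> 'c poly fract poly" where
  "DeltaA L F = shiftS L F - F"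

(* aW/u = (1/u) sum_i a_i w_i *)
definition combW :: "nat \<Rightarrow> (nat \<Rightarrow> 'c::field_gcd poly fract poly) \<Rightarrow> (nat \<Rightarrow> 'c poly fract) \<Rightarrow> 'c poly fract poly" where
  "combW r W c = (\<Sum>i<r. smult (c i) (W i))"

definition fracW :: "nat \<Rightarrow> (nat \<Rightarrow> 'c::field_gcd poly fract poly) \<Rightarrow> (nat \<Rightarrow> 'c poly) \<Rightarrow> 'c poly \<Rightarrow> 'c poly fract poly" where
  "fracW r W a u = combW r W (\<lambda>i. to_fract (a i) / to_fract u)"

definition is_basis_A :: "'c::field_gcd poly poly \<Rightarrow> (nat \<Rightarrow> 'c poly fract poly) \<Rightarrow> bool" where
  "is_basis_A L W \<longleftrightarrow> (\<forall>i<degree L. in_A L (W i)) \<and>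
     (\<forall>F. in_A L F \<longrightarrow> (\<exists>!c. (\<forall>i\<ge>degree L. c i = 0) \<and> F = combW (degree L) W c))"

(* Action on sequences b : \<eta> + Z \<rightarrow> \bar C((q)); b n stands for b(\<eta>+n)  *)

definition peval_q :: "('c::field \<Rightarrow> 'k::field) \<Rightarrow> 'k \<Rightarrow> 'c poly \<Rightarrow> 'k fls" where
  "peval_q \<iota> z p = poly (map_poly (\<lambda>c. fls_const (\<iota> c)) p) (fls_const z + fls_X)"

definition reval_q :: "('c::{field_char_0,field_gcd} \<Rightarrow> 'k::field) \<Rightarrow> 'k \<Rightarrow> 'c poly fract \<Rightarrow> 'k fls" where
  "reval_q \<iota> z f = (case quot_of_fract f of (n, d) \<Rightarrow> peval_q \<iota> z n / peval_q \<iota> z d)"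

definition op_act :: "('c::{field_char_0,field_gcd} \<Rightarrow> 'k::field) \<Rightarrow> 'k \<Rightarrow> 'c poly fract poly
     \<Rightarrow> (int \<Rightarrow> 'k fls) \<Rightarrow> int \<Rightarrow> 'k fls" where
  "op_act \<iota> \<eta> P b n = (\<Sum>i\<le>degree P. reval_q \<iota> (\<eta> + of_int n) (coeff P i) * b (n + int i))"

definition Sol :: "('c::{field_char_0,field_gcd} \<Rightarrow> 'k::field) \<Rightarrow> 'k \<Rightarrow> 'c poly poly \<Rightarrow> (int \<Rightarrow> 'k fls) set" where
  "Sol \<iota> \<eta> L = {b. \<forall>n. op_act \<iota> \<eta> (Lrat L) b n = 0}"

definition nu_q :: "'k::zero fls \<Rightarrow> ereal" where
  "nu_q s = (if s = 0 then \<infinity> else ereal (real_of_int (fls_subdegree s)))"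

definition esub :: "ereal \<Rightarrow> ereal \<Rightarrow> ereal" where
  "esub x y = (if x = \<infinity> \<and> y = \<infinity> then \<infinity> else x - y)"

definition val_at :: "('c::{field_char_0,field_gcd} \<Rightarrow> 'k::field) \<Rightarrow> 'c poly poly \<Rightarrow> 'k \<Rightarrow> 'c poly fract poly \<Rightarrow> ereal" where
  "val_at \<iota> L \<eta> F = (INF b\<in>Sol \<iota> \<eta> L.
      esub (nu_q (op_act \<iota> \<eta> F b 0)) (liminf (\<lambda>n::nat. nu_q (b (- int n)))))"

definition integral_at :: "('c::{field_char_0,field_gcd} \<Rightarrow> 'k::field) \<Rightarrow> 'c poly poly \<Rightarrow> 'k \<Rightarrow> 'c poly fract poly \<Rightarrow> bool" where
  "integral_at \<iota> L \<eta> F \<longleftrightarrow> val_at \<iota> L \<eta> F \<ge> 0"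

definition local_ring :: "('c::field_gcd \<Rightarrow> 'k::field) \<Rightarrow> 'k \<Rightarrow> 'c poly fract set" where
  "local_ring \<iota> \<eta> = {f. \<exists>n d. poly (map_poly \<iota> d) \<eta> \<noteq> 0 \<and> f = to_fract n / to_fract d}"

definition local_integral_basis :: "('c::{field_char_0,field_gcd} \<Rightarrow> 'k::field) \<Rightarrow> 'c poly poly \<Rightarrow> 'k \<Rightarrow> (nat \<Rightarrow> 'c poly fract poly) \<Rightarrow> bool" where
  "local_integral_basis \<iota> L \<eta> W \<longleftrightarrow>
     {F. in_A L F \<and> integral_at \<iota> L \<eta> F} =
     {combW (degree L) W c | c. \<forall>i<degree L. c i \<in> local_ring \<iota> \<eta>}"

(* dispersion disp_\<alpha>(p), with max \<emptyset> = -\<infinity> *)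
definition disp :: "'k::field \<Rightarrow> 'k poly \<Rightarrow> ereal" where
  "disp \<alpha> p = Sup {ereal (real k) | k::nat. \<exists>m::int.
      poly p (\<alpha> + of_int m) = 0 \<and> poly p (\<alpha> + of_int m + of_nat k) = 0}"

end

theory Submission
  imports Defs "HOL-Analysis.Extended_Real_Limits"
begin

text \<open>
  Put \<open>g = bW/v\<close>, so that \<open>S g = f + g\<close>. An element \<open>S F\<close> is integral at \<open>\<eta>\<close> iff \<open>F\<close> is integral
  at \<open>\<eta> + 1\<close>, because \<open>b \<mapsto> b(\<cdot> + 1)\<close> maps the solutions of \<open>L\<close> at \<open>\<eta>\<close> onto those at \<open>\<eta> + 1\<close>.
  In a local integral basis at \<open>\<eta>\<close>, integrality means that all coordinates lie in \<open>C(x)\<^sub>\<eta>\<close>;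
  since \<open>gcd(v, b) = 1\<close>, the element \<open>g\<close> is not integral at any root of \<open>v\<close>.
  Let \<open>\<zeta>\<^sub>0\<close> and \<open>\<zeta>\<^sub>1\<close> be the smallest and the largest root of \<open>v\<close> in \<open>\<alpha> + \<int>\<close>.
  If \<open>u(\<zeta>\<^sub>0 - 1) \<noteq> 0\<close>, then \<open>S g = f + g\<close> is integral at \<open>\<zeta>\<^sub>0 - 1\<close>, so \<open>g\<close> is integral at \<open>\<zeta>\<^sub>0\<close>.
  Since \<open>g\<close> is integral at \<open>\<zeta>\<^sub>1 + 1\<close>, \<open>f + g = S g\<close> is integral at \<open>\<zeta>\<^sub>1\<close>, and \<open>u(\<zeta>\<^sub>1) \<noteq> 0\<close> would make
  \<open>g\<close> integral at \<open>\<zeta>\<^sub>1\<close>. So \<open>u\<close> vanishes at \<open>\<zeta>\<^sub>0 - 1\<close> and at \<open>\<zeta>\<^sub>1\<close>, which gives (i).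
  In (ii) only one of these two points is available: \<open>\<zeta>\<^sub>0 - 1\<close> if \<open>\<zeta>\<^sub>0 \<le> \<beta>\<close>; otherwise
  \<open>\<zeta>\<^sub>1 > \<beta>\<close>, and integrality at \<open>\<zeta>\<^sub>1 + 1\<close> is replaced by \<open>S W = M W / e\<close> with \<open>e(\<zeta>\<^sub>1) \<noteq> 0\<close>,
  which makes the coordinates \<open>\<sigma>(b/v) M / e\<close> of \<open>S g\<close> regular at \<open>\<zeta>\<^sub>1\<close>.
  Either way \<open>u\<close> has a root in \<open>\<alpha> + \<int>\<close> different from \<open>\<beta>\<close>.
\<close>

section \<open>Ring homomorphisms and fraction fields\<close>

definition is_ring_hom :: "('a::comm_ring_1 \<Rightarrow> 'b::comm_ring_1) \<Rightarrow> bool" where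
  "is_ring_hom h \<longleftrightarrow>
     h 0 = 0 \<and> h 1 = 1 \<and> (\<forall>x y. h (x + y) = h x + h y) \<and> (\<forall>x y. h (x * y) = h x * h y)"

lemma is_ring_homD:
  assumes "is_ring_hom h"
  shows "h 0 = 0" "h 1 = 1" "h (x + y) = h x + h y" "h (x * y) = h x * h y"
  using assms by (auto simp: is_ring_hom_def)

lemma is_ring_hom_diff:
  assumes "is_ring_hom h"
  shows "h (x - y) = h x - h y"
  using is_ring_homD(3)[OF assms, of "x - y" y] by (simp add: eq_diff_eq)

lemma is_ring_hom_comp: "is_ring_hom f \<Longrightarrow> is_ring_hom g \<Longrightarrow> is_ring_hom (\<lambda>x. f (g x))"
  by (simp add: is_ring_hom_def)

lemma is_ring_hom_fls_const: "is_ring_hom fls_const"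
  unfolding is_ring_hom_def by (auto intro: fls_eqI)

lemma map_poly_hom_add:
  "is_ring_hom h \<Longrightarrow> map_poly h (p + q) = map_poly h p + map_poly h q"
  by (intro poly_eqI) (simp add: coeff_map_poly is_ring_homD)

lemma map_poly_hom_mult:
  assumes h: "is_ring_hom h"
  shows "map_poly h (p * q) = map_poly h p * map_poly h q"
proof (induction p)
  case (pCons c p)
  then show ?case
    by (simp add: map_poly_hom_add[OF h] map_poly_smult map_poly_pCons is_ring_homD[OF h])
qed simp

lemma is_ring_hom_poly_map_poly:
  "is_ring_hom h \<Longrightarrow> is_ring_hom (\<lambda>p. poly (map_poly h p) x)"
  by (simp add: is_ring_hom_def map_poly_hom_add map_poly_hom_mult)

lemma poly_map_poly_pcompose:
  assumes h: "is_ring_hom h"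
  shows "poly (map_poly h (pcompose p q)) x = poly (map_poly h p) (poly (map_poly h q) x)"
  by (induction p)
     (simp_all add: pcompose_pCons map_poly_hom_add[OF h] map_poly_hom_mult[OF h]
                    map_poly_pCons is_ring_homD[OF h])

definition fract_hom :: "('a::{ring_gcd,semiring_gcd_mult_normalize,idom_divide} \<Rightarrow> 'b::field) \<Rightarrow> 'a fract \<Rightarrow> 'b" where
  "fract_hom \<Phi> x = (case quot_of_fract x of (n, d) \<Rightarrow> \<Phi> n / \<Phi> d)"

lemma quot_of_fractE:
  obtains n d where "d \<noteq> 0" "x = to_fract n / to_fract d" "quot_of_fract x = (n, d)"
  by (metis Fract_conv_to_fract Fract_quot_of_fract prod.collapse snd_quot_of_fract_nonzero)

lemma fract_hom_frac:
  assumes h: "is_ring_hom \<Phi>" and nonzero: "\<And>p. p \<noteq> 0 \<Longrightarrow> \<Phi> p \<noteq> 0"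
    and "q \<noteq> 0"
  shows "fract_hom \<Phi> (to_fract p / to_fract q) = \<Phi> p / \<Phi> q"
proof -
  obtain n d where d: "d \<noteq> 0" and x: "to_fract p / to_fract q = to_fract n / to_fract d"
    and quot: "quot_of_fract (to_fract p / to_fract q) = (n, d)"
    by (rule quot_of_fractE)
  have "p * d = n * q"
    using x d \<open>q \<noteq> 0\<close> by (simp add: frac_eq_eq flip: to_fract_mult)
  then have "\<Phi> p * \<Phi> d = \<Phi> n * \<Phi> q" by (metis is_ring_homD(4)[OF h])
  then show ?thesis
    using quot nonzero[OF d] nonzero[OF \<open>q \<noteq> 0\<close>] by (simp add: fract_hom_def frac_eq_eq)
qed

lemma is_ring_hom_fract_hom:
  assumes h: "is_ring_hom \<Phi>" and nonzero: "\<And>p. p \<noteq> 0 \<Longrightarrow> \<Phi> p \<noteq> 0"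
  shows "is_ring_hom (fract_hom \<Phi>)"
proof -
  have frac: "fract_hom \<Phi> (to_fract p / to_fract q) = \<Phi> p / \<Phi> q" if "q \<noteq> 0" for p q
    by (rule fract_hom_frac[OF h]) (fact nonzero, fact)
  have "fract_hom \<Phi> (x + y) = fract_hom \<Phi> x + fract_hom \<Phi> y \<and>
        fract_hom \<Phi> (x * y) = fract_hom \<Phi> x * fract_hom \<Phi> y" for x y
  proof -
    obtain n1 d1 where 1: "d1 \<noteq> 0" "x = to_fract n1 / to_fract d1" by (rule quot_of_fractE)
    obtain n2 d2 where 2: "d2 \<noteq> 0" "y = to_fract n2 / to_fract d2" by (rule quot_of_fractE)
    have sum: "x + y = to_fract (n1 * d2 + n2 * d1) / to_fract (d1 * d2)"
      and prod: "x * y = to_fract (n1 * n2) / to_fract (d1 * d2)"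
      using 1 2 by (simp_all add: field_simps)
    have d12: "d1 * d2 \<noteq> 0" using 1 2 by simp
    have "fract_hom \<Phi> x = \<Phi> n1 / \<Phi> d1" "fract_hom \<Phi> y = \<Phi> n2 / \<Phi> d2"
      unfolding 1(2) 2(2) using 1(1) 2(1) by (simp_all add: frac)
    moreover have "fract_hom \<Phi> (x + y) = \<Phi> (n1 * d2 + n2 * d1) / \<Phi> (d1 * d2)"
      unfolding sum using d12 by (rule frac)
    moreover have "fract_hom \<Phi> (x * y) = \<Phi> (n1 * n2) / \<Phi> (d1 * d2)"
      unfolding prod using d12 by (rule frac)
    ultimately show ?thesis
      using nonzero[OF 1(1)] nonzero[OF 2(1)] by (simp only:) (simp add: is_ring_homD[OF h] field_simps)
  qed
  moreover have "fract_hom \<Phi> 0 = 0" "fract_hom \<Phi> 1 = 1"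
    by (simp_all add: fract_hom_def is_ring_homD[OF h])
  ultimately show ?thesis by (simp add: is_ring_hom_def)
qed

section \<open>The shift on \<open>C(x)\<close> and the action of \<open>S\<close> on \<open>A\<close>\<close>

lemma is_ring_hom_pcompose_shift: "is_ring_hom (\<lambda>p. to_fract (pcompose p [:1, 1:]))"
  by (simp add: is_ring_hom_def pcompose_add pcompose_mult pcompose_1)

lemma sigma_rat_conv_fract_hom: "sigma_rat = fract_hom (\<lambda>p. to_fract (pcompose p [:1, 1:]))"
  by (simp add: fun_eq_iff sigma_rat_def fract_hom_def)

lemma is_ring_hom_sigma_rat: "is_ring_hom sigma_rat"
  unfolding sigma_rat_conv_fract_hom
  by (rule is_ring_hom_fract_hom[OF is_ring_hom_pcompose_shift]) (simp add: pcompose_eq_0_iff)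

lemma sigma_rat_frac:
  "q \<noteq> 0 \<Longrightarrow> sigma_rat (to_fract p / to_fract q) =
     to_fract (pcompose p [:1, 1:]) / to_fract (pcompose q [:1, 1:])"
  unfolding sigma_rat_conv_fract_hom
  by (rule fract_hom_frac[OF is_ring_hom_pcompose_shift]) (simp_all add: pcompose_eq_0_iff)

lemma shiftS_add: "shiftS L (F + G) = shiftS L F + shiftS L G"
  unfolding shiftS_def Let_def map_poly_hom_add[OF is_ring_hom_sigma_rat]
  by (simp add: add_divide_distrib smult_add_left algebra_simps coeff_pCons split: nat.split)

lemma shiftS_smult: "shiftS L (smult c F) = smult (sigma_rat c) (shiftS L F)"
proof -
  have "map_poly sigma_rat (smult c F) = smult (sigma_rat c) (map_poly sigma_rat F)"
    by (rule map_poly_smult) (simp_all add: is_ring_homD[OF is_ring_hom_sigma_rat])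
  then show ?thesis
    by (simp add: shiftS_def Let_def smult_diff_right mult.assoc coeff_pCons split: nat.split)
qed

lemma shiftS_sum: "shiftS L (sum f A) = (\<Sum>i\<in>A. shiftS L (f i))"
proof -
  have "shiftS L 0 = 0"
    by (simp add: shiftS_def is_ring_homD(1)[OF is_ring_hom_sigma_rat])
  then show ?thesis
    by (induction A rule: infinite_finite_induct) (simp_all add: shiftS_add)
qed

lemma shiftS_combW: "shiftS L (combW r W c) = (\<Sum>i<r. smult (sigma_rat (c i)) (shiftS L (W i)))"
  unfolding combW_def shiftS_sum by (simp add: shiftS_smult)

lemma smult_sum_right: "smult a (sum f A) = (\<Sum>i\<in>A. smult a (f i))"
  by (induction A rule: infinite_finite_induct) (simp_all add: smult_add_right)

lemma combW_add: "combW r W c1 + combW r W c2 = combW r W (\<lambda>i. c1 i + c2 i)"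
  unfolding combW_def by (simp add: sum.distrib smult_add_left)

lemma combW_cong: "(\<And>i. i < r \<Longrightarrow> c1 i = c2 i) \<Longrightarrow> combW r W c1 = combW r W c2"
  unfolding combW_def by (intro sum.cong) auto

lemma in_A_combW: "is_basis_A L W \<Longrightarrow> in_A L (combW (degree L) W c)"
  unfolding is_basis_A_def in_A_def combW_def by (simp add: coeff_sum)

lemma combW_coeff_unique:
  assumes basis: "is_basis_A L W" and eq: "combW (degree L) W c1 = combW (degree L) W c2"
    and i: "i < degree L"
  shows "c1 i = c2 i"
proof -
  define trunc where "trunc c j = (if j < degree L then c j else 0)" for c :: "nat \<Rightarrow> 'a poly fract" and j
  have "combW (degree L) W (trunc c) = combW (degree L) W c" for c
    by (rule combW_cong) (simp add: trunc_def)
  then have "(\<forall>j\<ge>degree L. trunc c j = 0) \<and> combW (degree L) W c1 = combW (degree L) W (trunc c)"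
    if "c = c1 \<or> c = c2" for c
    using that eq by (auto simp: trunc_def)
  moreover have "\<exists>!c. (\<forall>j\<ge>degree L. c j = 0) \<and> combW (degree L) W c1 = combW (degree L) W c"
    using basis in_A_combW[OF basis] unfolding is_basis_A_def by blast
  ultimately have "trunc c1 = trunc c2" by blast
  then show ?thesis using i by (metis trunc_def)
qed

section \<open>Solutions, valuations and local rings\<close>

lemma op_act_shift_base: "op_act \<iota> (\<eta> + 1) P (\<lambda>n. b (n + 1)) n = op_act \<iota> \<eta> P b (n + 1)"
  unfolding op_act_def by (intro sum.cong refl) (simp add: algebra_simps)

lemma reval_q_0 [simp]: "reval_q \<iota> z 0 = 0"
  by (simp add: reval_q_def peval_q_def)

lemma op_act_eq_sum:
  assumes "degree P \<le> N"
  shows "op_act \<iota> \<eta> P b n = (\<Sum>i\<le>N. reval_q \<iota> (\<eta> + of_int n) (coeff P i) * b (n + int i))"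
  unfolding op_act_def
  by (rule sum.mono_neutral_left) (use assms in \<open>auto simp: coeff_eq_0\<close>)

lemma Sol_shift_base: "Sol \<iota> (\<eta> + 1) L = (\<lambda>b n. b (n + 1)) ` Sol \<iota> \<eta> L"
proof
  show "(\<lambda>b n. b (n + 1)) ` Sol \<iota> \<eta> L \<subseteq> Sol \<iota> (\<eta> + 1) L"
    by (auto simp: Sol_def op_act_shift_base)
  show "Sol \<iota> (\<eta> + 1) L \<subseteq> (\<lambda>b n. b (n + 1)) ` Sol \<iota> \<eta> L"
  proof
    fix b assume b: "b \<in> Sol \<iota> (\<eta> + 1) L"
    have "op_act \<iota> \<eta> (Lrat L) (\<lambda>n. b (n - 1)) n = 0" for n
      using op_act_shift_base[of \<iota> \<eta> "Lrat L" "\<lambda>n. b (n - 1)" "n - 1"] b by (simp add: Sol_def)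
    then have "(\<lambda>n. b (n - 1)) \<in> Sol \<iota> \<eta> L" by (simp add: Sol_def)
    then show "b \<in> (\<lambda>b n. b (n + 1)) ` Sol \<iota> \<eta> L" by force
  qed
qed

lemma liminf_shift_int:
  "liminf (\<lambda>n::nat. f (1 - int n)) = liminf (\<lambda>n::nat. f (- int n) :: ereal)"
  using liminf_shift[of "\<lambda>n. f (1 - int n)"] by simp

lemma poly_fls_X_conv_fps_of_poly:
  fixes p :: "'a::comm_ring_1 poly"
  shows "poly (map_poly fls_const p) fls_X = fps_to_fls (fps_of_poly p)"
  by (induction p) (simp_all add: map_poly_pCons fps_of_poly_pCons fls_times_fps_to_fls mult.commute)

locale field_embedding =
  fixes \<iota> :: "'c::{field_char_0,field_gcd} \<Rightarrow> 'k::field_char_0"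
  assumes hom: "is_ring_hom \<iota>" and inj: "inj \<iota>"
begin

abbreviation ev :: "'k \<Rightarrow> 'c poly \<Rightarrow> 'k" where
  "ev z p \<equiv> poly (map_poly \<iota> p) z"

lemma is_ring_hom_ev: "is_ring_hom (\<lambda>p. ev z p)"
  by (rule is_ring_hom_poly_map_poly[OF hom])

lemmas ev_1 = is_ring_homD(2)[OF is_ring_hom_ev]
   and ev_add = is_ring_homD(3)[OF is_ring_hom_ev]
   and ev_mult = is_ring_homD(4)[OF is_ring_hom_ev]

lemma ev_pcompose_shift: "ev z (pcompose p [:1, 1:]) = ev (z + 1) p"
  using is_ring_homD[OF hom] by (simp add: poly_map_poly_pcompose[OF hom] map_poly_pCons add.commute)

lemma map_poly_iota_eq_0_iff: "map_poly \<iota> p = 0 \<longleftrightarrow> p = 0"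
proof -
  have "\<iota> x = 0 \<longleftrightarrow> x = 0" for x
    using inj_eq[OF inj, of x 0] is_ring_homD(1)[OF hom] by simp
  then show ?thesis by (simp add: map_poly_eq_0_iff)
qed

lemma peval_q_conv_fps_of_poly:
  "peval_q \<iota> z p = fps_to_fls (fps_of_poly (pcompose (map_poly \<iota> p) [:z, 1:]))"
proof -
  have "peval_q \<iota> z p =
        poly (map_poly fls_const (map_poly \<iota> p)) (poly (map_poly fls_const [:z, 1:]) fls_X)"
    using is_ring_homD(1)[OF hom]
    by (simp add: peval_q_def map_poly_map_poly o_def map_poly_pCons)
  also have "\<dots> = poly (map_poly fls_const (pcompose (map_poly \<iota> p) [:z, 1:])) fls_X"
    by (rule poly_map_poly_pcompose[OF is_ring_hom_fls_const, symmetric])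
  finally show ?thesis
    by (simp only: poly_fls_X_conv_fps_of_poly)
qed

lemma peval_q_nonzero: "p \<noteq> 0 \<Longrightarrow> peval_q \<iota> z p \<noteq> 0"
  by (simp add: peval_q_conv_fps_of_poly pcompose_eq_0_iff map_poly_iota_eq_0_iff
                fps_of_poly_eq_iff[of _ 0, simplified])

lemma is_ring_hom_peval_q: "is_ring_hom (peval_q \<iota> z)"
  unfolding peval_q_def
  by (rule is_ring_hom_poly_map_poly[OF is_ring_hom_comp[OF is_ring_hom_fls_const hom]])

lemma peval_q_pcompose_shift: "peval_q \<iota> z (pcompose p [:1, 1:]) = peval_q \<iota> (z + 1) p"
proof -
  have h: "is_ring_hom (\<lambda>c. fls_const (\<iota> c))"
    by (rule is_ring_hom_comp[OF is_ring_hom_fls_const hom])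
  have "poly (map_poly (\<lambda>c. fls_const (\<iota> c)) [:1, 1:]) (fls_const z + fls_X) =
        fls_const (z + 1) + (fls_X :: 'k fls)"
    using is_ring_homD[OF h] is_ring_homD(3)[OF is_ring_hom_fls_const, of z 1]
    by (simp add: map_poly_pCons)
  then show ?thesis
    by (simp add: peval_q_def poly_map_poly_pcompose[OF h])
qed

lemma reval_q_conv_fract_hom: "reval_q \<iota> z = fract_hom (peval_q \<iota> z)"
  by (simp add: fun_eq_iff reval_q_def fract_hom_def)

lemma is_ring_hom_reval_q: "is_ring_hom (reval_q \<iota> z)"
  unfolding reval_q_conv_fract_hom
  by (rule is_ring_hom_fract_hom[OF is_ring_hom_peval_q peval_q_nonzero])

lemma reval_q_frac:
  "q \<noteq> 0 \<Longrightarrow> reval_q \<iota> z (to_fract p / to_fract q) = peval_q \<iota> z p / peval_q \<iota> z q"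
  unfolding reval_q_conv_fract_hom
  by (rule fract_hom_frac[OF is_ring_hom_peval_q]) (simp_all add: peval_q_nonzero)

lemma reval_q_sigma_rat: "reval_q \<iota> z (sigma_rat x) = reval_q \<iota> (z + 1) x"
proof -
  obtain n d where d: "d \<noteq> 0" and x: "x = to_fract n / to_fract d" by (rule quot_of_fractE)
  have "pcompose d [:1, 1:] \<noteq> 0" using d by (simp add: pcompose_eq_0_iff)
  then show ?thesis
    using d by (simp add: x sigma_rat_frac reval_q_frac peval_q_pcompose_shift)
qed

lemma op_act_diff: "op_act \<iota> \<eta> (P - Q) b n = op_act \<iota> \<eta> P b n - op_act \<iota> \<eta> Q b n"
proof -
  let ?N = "max (degree P) (degree Q)"
  have "degree (P - Q) \<le> ?N" by (rule degree_diff_le) auto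
  then show ?thesis
    using op_act_eq_sum[of P ?N \<iota>] op_act_eq_sum[of Q ?N \<iota>] op_act_eq_sum[of "P - Q" ?N \<iota>]
    by (simp add: is_ring_hom_diff[OF is_ring_hom_reval_q] algebra_simps sum_subtractf)
qed

lemma op_act_smult:
  "op_act \<iota> \<eta> (smult c P) b n = reval_q \<iota> (\<eta> + of_int n) c * op_act \<iota> \<eta> P b n"
  using op_act_eq_sum[of P "degree P" \<iota>] op_act_eq_sum[OF degree_smult_le[of c P], of \<iota>]
  by (simp add: is_ring_homD(4)[OF is_ring_hom_reval_q] sum_distrib_left mult.assoc)

text \<open>The reduction modulo \<open>L\<close> in \<open>shiftS\<close> is invisible on solutions of \<open>L\<close>.\<close>
lemma op_act_shiftS:
  assumes "b \<in> Sol \<iota> \<eta> L"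
  shows "op_act \<iota> \<eta> (shiftS L F) b 0 = op_act \<iota> (\<eta> + 1) F (\<lambda>n. b (n + 1)) 0"
proof -
  define G where "G = pCons 0 (map_poly sigma_rat F)"
  have degG: "degree G \<le> Suc (degree F)"
    using degree_pCons_le[of 0 "map_poly sigma_rat F"] map_poly_degree_leq[of sigma_rat F]
    unfolding G_def by linarith
  have "op_act \<iota> \<eta> G b 0 = (\<Sum>i\<le>Suc (degree F). reval_q \<iota> \<eta> (coeff G i) * b (int i))"
    using op_act_eq_sum[OF degG, of \<iota> \<eta> b 0] by simp
  also have "\<dots> = (\<Sum>j\<le>degree F. reval_q \<iota> \<eta> (coeff G (Suc j)) * b (int (Suc j)))"
    by (subst sum.atMost_Suc_shift) (simp add: G_def)
  also have "\<dots> = op_act \<iota> (\<eta> + 1) F (\<lambda>n. b (n + 1)) 0"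
    by (simp add: op_act_def G_def coeff_map_poly is_ring_homD(1)[OF is_ring_hom_sigma_rat]
                  reval_q_sigma_rat add.commute)
  finally have "op_act \<iota> \<eta> G b 0 = op_act \<iota> (\<eta> + 1) F (\<lambda>n. b (n + 1)) 0" .
  moreover have "op_act \<iota> \<eta> (Lrat L) b 0 = 0" using assms by (simp add: Sol_def)
  ultimately show ?thesis
    by (simp add: shiftS_def G_def Let_def op_act_diff op_act_smult)
qed

lemma val_at_shiftS: "val_at \<iota> L \<eta> (shiftS L F) = val_at \<iota> L (\<eta> + 1) F"
proof -
  have "val_at \<iota> L \<eta> (shiftS L F) =
        (INF b\<in>Sol \<iota> \<eta> L. (\<lambda>b'. esub (nu_q (op_act \<iota> (\<eta> + 1) F b' 0))
                         (liminf (\<lambda>n::nat. nu_q (b' (- int n))))) (\<lambda>n. b (n + 1)))"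
    unfolding val_at_def
    by (intro INF_cong refl) (simp add: op_act_shiftS liminf_shift_int[of "\<lambda>n. nu_q (b n)" for b])
  also have "\<dots> = val_at \<iota> L (\<eta> + 1) F"
    unfolding val_at_def Sol_shift_base by (simp add: image_comp)
  finally show ?thesis .
qed

lemma integral_at_shiftS: "integral_at \<iota> L \<eta> (shiftS L F) \<longleftrightarrow> integral_at \<iota> L (\<eta> + 1) F"
  by (simp add: integral_at_def val_at_shiftS)

lemma local_ring_frac: "ev z q \<noteq> 0 \<Longrightarrow> to_fract p / to_fract q \<in> local_ring \<iota> z"
  unfolding local_ring_def by blast

lemma local_ringE:
  assumes "x \<in> local_ring \<iota> z"
  obtains n d where "ev z d \<noteq> 0" "d \<noteq> 0" "x = to_fract n / to_fract d"
  using assms unfolding local_ring_def by force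

lemma local_ring_add:
  assumes "x \<in> local_ring \<iota> z" "y \<in> local_ring \<iota> z"
  shows "x + y \<in> local_ring \<iota> z"
proof -
  obtain n1 d1 n2 d2 where 1: "ev z d1 \<noteq> 0" "d1 \<noteq> 0" "x = to_fract n1 / to_fract d1"
    and 2: "ev z d2 \<noteq> 0" "d2 \<noteq> 0" "y = to_fract n2 / to_fract d2"
    using assms by (meson local_ringE)
  have eq: "x + y = to_fract (n1 * d2 + n2 * d1) / to_fract (d1 * d2)"
    using 1 2 by (simp add: field_simps)
  have "ev z (d1 * d2) \<noteq> 0" using 1 2 by (simp add: ev_mult)
  then show ?thesis unfolding eq by (rule local_ring_frac)
qed

lemma local_ring_mult:
  assumes "x \<in> local_ring \<iota> z" "y \<in> local_ring \<iota> z"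
  shows "x * y \<in> local_ring \<iota> z"
proof -
  obtain n1 d1 n2 d2 where 1: "ev z d1 \<noteq> 0" "x = to_fract n1 / to_fract d1"
    and 2: "ev z d2 \<noteq> 0" "y = to_fract n2 / to_fract d2"
    using assms by (meson local_ringE)
  have eq: "x * y = to_fract (n1 * n2) / to_fract (d1 * d2)" using 1 2 by simp
  have "ev z (d1 * d2) \<noteq> 0" using 1 2 by (simp add: ev_mult)
  then show ?thesis unfolding eq by (rule local_ring_frac)
qed

lemma local_ring_uminus:
  assumes "x \<in> local_ring \<iota> z"
  shows "- x \<in> local_ring \<iota> z"
proof -
  obtain n d where "ev z d \<noteq> 0" and x: "x = to_fract n / to_fract d"
    using assms by (rule local_ringE)
  then show ?thesis
    using local_ring_frac[where q = d and p = "- n"] by (simp add: x)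
qed

lemma local_ring_diff: "x \<in> local_ring \<iota> z \<Longrightarrow> y \<in> local_ring \<iota> z \<Longrightarrow> x - y \<in> local_ring \<iota> z"
  unfolding diff_conv_add_uminus by (intro local_ring_add local_ring_uminus)

lemma local_ring_0: "0 \<in> local_ring \<iota> z"
  using local_ring_frac[where q = 1 and p = 0] ev_1 by simp

lemma local_ring_sum: "(\<And>i. i \<in> A \<Longrightarrow> f i \<in> local_ring \<iota> z) \<Longrightarrow> sum f A \<in> local_ring \<iota> z"
  by (induction A rule: infinite_finite_induct) (simp_all add: local_ring_0 local_ring_add)

lemma local_ring_numerator_root:
  assumes "ev z v = 0" "v \<noteq> 0" "to_fract p / to_fract v \<in> local_ring \<iota> z"
  shows "ev z p = 0"
proof -
  obtain n d where d: "ev z d \<noteq> 0" "d \<noteq> 0" and eq: "to_fract p / to_fract v = to_fract n / to_fract d"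
    using assms(3) by (rule local_ringE)
  have "p * d = n * v"
    using eq d(2) assms(2) by (simp add: frac_eq_eq flip: to_fract_mult)
  then have "ev z p * ev z d = 0" using assms(1) by (metis ev_mult mult_zero_right)
  then show ?thesis using d(1) by simp
qed

lemma ev_Gcd_eq_0: "finite S \<Longrightarrow> (\<And>s. s \<in> S \<Longrightarrow> ev z s = 0) \<Longrightarrow> ev z (Gcd S) = 0"
proof (induction S rule: finite_induct)
  case (insert p S)
  have "ev z (gcd p (Gcd S)) = 0"
    unfolding bezout_coefficients_fst_snd[symmetric] using insert by (simp add: ev_add ev_mult)
  then show ?case by (simp add: Gcd_insert)
qed simp

lemma exists_fraction_not_local:
  assumes "Gcd (insert v (b ` I)) = 1" "finite I" "v \<noteq> 0" "ev z v = 0"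
  shows "\<exists>i\<in>I. to_fract (b i) / to_fract v \<notin> local_ring \<iota> z"
proof (rule ccontr)
  assume "\<not> ?thesis"
  then have "ev z (Gcd (insert v (b ` I))) = 0"
    using assms(2-4) by (intro ev_Gcd_eq_0) (auto intro: local_ring_numerator_root)
  then show False using assms(1) ev_1 by simp
qed

lemma integral_at_combW_iff:
  assumes "is_basis_A L W" "local_integral_basis \<iota> L z W"
  shows "integral_at \<iota> L z (combW (degree L) W c) \<longleftrightarrow> (\<forall>i<degree L. c i \<in> local_ring \<iota> z)"
proof
  assume "integral_at \<iota> L z (combW (degree L) W c)"
  then obtain c' where "combW (degree L) W c = combW (degree L) W c'"
    and "\<forall>i<degree L. c' i \<in> local_ring \<iota> z"
    using assms in_A_combW[OF assms(1)] unfolding local_integral_basis_def by blast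
  then show "\<forall>i<degree L. c i \<in> local_ring \<iota> z"
    using combW_coeff_unique[OF assms(1)] by metis
next
  assume "\<forall>i<degree L. c i \<in> local_ring \<iota> z"
  then show "integral_at \<iota> L z (combW (degree L) W c)"
    using assms(2) unfolding local_integral_basis_def by blast
qed

end

lemma field_embedding_if_alg_closure: "is_alg_closure \<iota> \<Longrightarrow> field_embedding \<iota>"
  by unfold_locales (simp_all add: is_alg_closure_def is_ring_hom_def)

section \<open>Dispersion\<close>

lemma finite_int_roots:
  fixes p :: "'a::{idom,ring_char_0} poly"
  assumes "p \<noteq> 0"
  shows "finite {m::int. poly p (\<alpha> + of_int m) = 0}"
proof -
  have "inj (\<lambda>m::int. \<alpha> + of_int m)" by (rule injI) simp
  then have "finite ((\<lambda>m::int. \<alpha> + of_int m) -` {x. poly p x = 0})"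
    using poly_roots_finite[OF assms] by (rule finite_vimageI[rotated])
  then show ?thesis by (simp add: vimage_def)
qed

lemma int_roots_extremes:
  fixes p :: "'a::{idom,ring_char_0} poly"
  assumes "p \<noteq> 0" "poly p (\<alpha> + of_int m) = 0"
  obtains lo hi where "poly p (\<alpha> + of_int lo) = 0" "poly p (\<alpha> + of_int hi) = 0"
    "\<And>m. poly p (\<alpha> + of_int m) = 0 \<Longrightarrow> lo \<le> m \<and> m \<le> hi"
proof -
  let ?R = "{m::int. poly p (\<alpha> + of_int m) = 0}"
  have fin: "finite ?R" using finite_int_roots[OF assms(1)] .
  moreover have "?R \<noteq> {}" using assms(2) by auto
  ultimately have "Min ?R \<in> ?R" "Max ?R \<in> ?R" by (rule Min_in, rule Max_in)
  then show ?thesis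
    using fin by (intro that[of "Min ?R" "Max ?R"]) auto
qed

lemma disp_ge_root_distance:
  assumes "poly p (\<alpha> + of_int m1) = 0" "poly p (\<alpha> + of_int m2) = 0" "m1 \<le> m2"
  shows "ereal (real_of_int (m2 - m1)) \<le> disp \<alpha> p"
proof -
  have e: "\<alpha> + of_int m1 + of_nat (nat (m2 - m1)) = \<alpha> + of_int m2"
    using assms(3) by (simp add: of_nat_nat)
  have "ereal (real (nat (m2 - m1))) \<le> disp \<alpha> p"
    unfolding disp_def
    by (rule Sup_upper, rule CollectI, intro exI[of _ "nat (m2 - m1)"] conjI refl exI[of _ m1])
       (simp_all only: e assms(1,2))
  then show ?thesis using assms(3) by simp
qed

lemma disp_le_root_span:
  assumes "\<And>m. poly p (\<alpha> + of_int m) = 0 \<Longrightarrow> lo \<le> m \<and> m \<le> hi"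
  shows "disp \<alpha> p \<le> ereal (real_of_int (hi - lo))"
  unfolding disp_def
proof (rule Sup_least, clarify)
  fix k :: nat and m :: int
  assume "poly p (\<alpha> + of_int m) = 0" "poly p (\<alpha> + of_int m + of_nat k) = 0"
  then have "lo \<le> m" "m + int k \<le> hi"
    using assms[of m] assms[of "m + int k"] by (simp_all add: add.assoc)
  then show "ereal (real k) \<le> ereal (real_of_int (hi - lo))" by simp
qed

lemma disp_nonneg_imp_int_root:
  assumes "0 \<le> disp \<alpha> p"
  shows "\<exists>m. poly p (\<alpha> + of_int m) = 0"
proof (rule ccontr)
  assume "\<not> ?thesis"
  then have "disp \<alpha> p = Sup {}" unfolding disp_def by (intro arg_cong[where f = Sup]) auto
  then show False using assms by (simp add: bot_ereal_def)
qed

lemma disp_ge_1_if_two_int_roots: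
  assumes "poly p (\<alpha> + of_int m1) = 0" "poly p (\<alpha> + of_int m2) = 0" "m1 \<noteq> m2"
  shows "1 \<le> disp \<alpha> p"
proof -
  have "ereal (real_of_int \<bar>m2 - m1\<bar>) \<le> disp \<alpha> p"
    using disp_ge_root_distance[OF assms(1,2)] disp_ge_root_distance[OF assms(2,1)]
    by (cases "m1 \<le> m2") simp_all
  moreover have "1 \<le> ereal (real_of_int \<bar>m2 - m1\<bar>)" using assms(3) by simp
  ultimately show ?thesis by (rule order_trans[rotated])
qed

section \<open>Denominators of a summable element\<close>

locale telescoping = field_embedding \<iota>
  for \<iota> :: "'c::{field_char_0,field_gcd} \<Rightarrow> 'k::field_char_0" +
  fixes L :: "'c poly poly" and W :: "nat \<Rightarrow> 'c poly fract poly"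
    and a b :: "nat \<Rightarrow> 'c poly" and u v :: "'c poly"
  assumes basis: "is_basis_A L W" and v_nonzero: "v \<noteq> 0"
    and gcd_v: "Gcd (insert v (b ` {..<degree L})) = 1"
    and f_eq_Delta_g: "fracW (degree L) W a u = DeltaA L (fracW (degree L) W b v)"
begin

lemma shiftS_g_eq_f_plus_g:
  "shiftS L (fracW (degree L) W b v) =
   combW (degree L) W (\<lambda>i. to_fract (a i) / to_fract u + to_fract (b i) / to_fract v)"
  using f_eq_Delta_g unfolding fracW_def DeltaA_def combW_add[symmetric] by (simp add: algebra_simps)

lemma root_of_u_if_shift_local:
  assumes "ev z v = 0" and "shiftS L (fracW (degree L) W b v) = combW (degree L) W c"
    and "\<forall>i<degree L. c i \<in> local_ring \<iota> z"
  shows "ev z u = 0"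
proof (rule ccontr)
  assume u: "ev z u \<noteq> 0"
  have "to_fract (b i) / to_fract v \<in> local_ring \<iota> z" if i: "i < degree L" for i
  proof -
    have "combW (degree L) W c =
          combW (degree L) W (\<lambda>i. to_fract (a i) / to_fract u + to_fract (b i) / to_fract v)"
      using assms(2) shiftS_g_eq_f_plus_g by simp
    from combW_coeff_unique[OF basis this i]
    have "c i = to_fract (a i) / to_fract u + to_fract (b i) / to_fract v" by simp
    then have "to_fract (b i) / to_fract v = c i - to_fract (a i) / to_fract u" by simp
    then show ?thesis using assms(3) i u by (simp add: local_ring_diff local_ring_frac)
  qed
  then show False using exists_fraction_not_local[OF gcd_v _ v_nonzero assms(1)] by auto
qed

lemma root_of_u_before_roots_of_v:
  assumes "ev z v \<noteq> 0" "ev (z + 1) v = 0"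
    and "local_integral_basis \<iota> L z W" "local_integral_basis \<iota> L (z + 1) W"
  shows "ev z u = 0"
proof (rule ccontr)
  assume u: "ev z u \<noteq> 0"
  have "integral_at \<iota> L z (shiftS L (fracW (degree L) W b v))"
    unfolding shiftS_g_eq_f_plus_g integral_at_combW_iff[OF basis assms(3)]
    using u assms(1) by (simp add: local_ring_add local_ring_frac)
  then have "\<forall>i<degree L. to_fract (b i) / to_fract v \<in> local_ring \<iota> (z + 1)"
    using integral_at_combW_iff[OF basis assms(4)] by (simp add: integral_at_shiftS fracW_def)
  then show False using exists_fraction_not_local[OF gcd_v _ v_nonzero assms(2)] by auto
qed

lemma root_of_u_at_last_root_of_v:
  assumes "ev z v = 0" "ev (z + 1) v \<noteq> 0"
    and "local_integral_basis \<iota> L z W" "local_integral_basis \<iota> L (z + 1) W"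
  shows "ev z u = 0"
proof (rule root_of_u_if_shift_local[OF assms(1) shiftS_g_eq_f_plus_g])
  have "integral_at \<iota> L (z + 1) (fracW (degree L) W b v)"
    unfolding fracW_def integral_at_combW_iff[OF basis assms(4)]
    using assms(2) by (simp add: local_ring_frac)
  then show "\<forall>i<degree L. to_fract (a i) / to_fract u + to_fract (b i) / to_fract v \<in> local_ring \<iota> z"
    by (simp flip: integral_at_shiftS integral_at_combW_iff[OF basis assms(3)] add: shiftS_g_eq_f_plus_g)
qed

lemma root_of_u_at_last_root_of_v_companion:
  assumes "ev z v = 0" "ev (z + 1) v \<noteq> 0" "ev z e \<noteq> 0"
    and SW: "\<forall>i<degree L. shiftS L (W i) =
               (\<Sum>j<degree L. smult (to_fract (M i j) / to_fract e) (W j))"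
  shows "ev z u = 0"
proof -
  define r where "r = degree L"
  define c where "c j = (\<Sum>i<r. sigma_rat (to_fract (b i) / to_fract v) * (to_fract (M i j) / to_fract e))"
    for j
  have "shiftS L (fracW r W b v) =
        (\<Sum>i<r. smult (sigma_rat (to_fract (b i) / to_fract v))
                   (\<Sum>j<r. smult (to_fract (M i j) / to_fract e) (W j)))"
    using SW unfolding fracW_def shiftS_combW r_def by (intro sum.cong refl) simp
  also have "\<dots> = combW r W c"
    unfolding combW_def c_def smult_sum_right
    by (subst sum.swap) (simp add: smult_sum)
  finally have "shiftS L (fracW r W b v) = combW r W c" .
  moreover have "c j \<in> local_ring \<iota> z" for j
  proof -
    have "ev z (pcompose v [:1, 1:]) \<noteq> 0" using assms(2) by (simp add: ev_pcompose_shift)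
    then have "sigma_rat (to_fract (b i) / to_fract v) \<in> local_ring \<iota> z" for i
      using v_nonzero by (simp add: sigma_rat_frac local_ring_frac)
    then show ?thesis
      unfolding c_def using assms(3) by (intro local_ring_sum local_ring_mult local_ring_frac)
  qed
  ultimately show ?thesis
    unfolding r_def using assms(1) by (intro root_of_u_if_shift_local) auto
qed

lemma int_root_extremes_of_v:
  assumes "0 \<le> disp \<alpha> (map_poly \<iota> v)"
  obtains lo hi where "ev (\<alpha> + of_int lo) v = 0" "ev (\<alpha> + of_int hi) v = 0"
    "\<And>m. ev (\<alpha> + of_int m) v = 0 \<Longrightarrow> lo \<le> m \<and> m \<le> hi"
proof -
  obtain m where m: "ev (\<alpha> + of_int m) v = 0" using disp_nonneg_imp_int_root[OF assms] ..
  have "map_poly \<iota> v \<noteq> 0" using v_nonzero by (simp add: map_poly_iota_eq_0_iff)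
  from this m show ?thesis by (rule int_roots_extremes) (rule that)
qed

lemma disp_u_ge_disp_v_plus_1:
  assumes "0 \<le> disp \<alpha> (map_poly \<iota> v)"
    and "\<And>m. local_integral_basis \<iota> L (\<alpha> + of_int m) W"
  shows "disp \<alpha> (map_poly \<iota> v) + 1 \<le> disp \<alpha> (map_poly \<iota> u)"
proof -
  obtain lo hi where lo: "ev (\<alpha> + of_int lo) v = 0" and hi: "ev (\<alpha> + of_int hi) v = 0"
    and span: "\<And>m. ev (\<alpha> + of_int m) v = 0 \<Longrightarrow> lo \<le> m \<and> m \<le> hi"
    using int_root_extremes_of_v[OF assms(1)] by blast
  have "ev (\<alpha> + of_int (lo - 1)) u = 0"
    using span[of "lo - 1"] lo assms(2)[of "lo - 1"] assms(2)[of lo]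
    by (intro root_of_u_before_roots_of_v) (auto simp: algebra_simps)
  moreover have "ev (\<alpha> + of_int hi) u = 0"
    using span[of "hi + 1"] hi assms(2)[of hi] assms(2)[of "hi + 1"]
    by (intro root_of_u_at_last_root_of_v) (auto simp: algebra_simps)
  moreover have "lo - 1 \<le> hi" using span[OF lo] by simp
  ultimately have root_distance: "ereal (real_of_int (hi - (lo - 1))) \<le> disp \<alpha> (map_poly \<iota> u)"
    by (rule disp_ge_root_distance)
  have "disp \<alpha> (map_poly \<iota> v) + 1 \<le> ereal (real_of_int (hi - lo)) + 1"
    using disp_le_root_span[of "map_poly \<iota> v" \<alpha> lo hi] span by (intro add_right_mono) blast
  also have "\<dots> = ereal (real_of_int (hi - (lo - 1)))" by simp
  also have "\<dots> \<le> disp \<alpha> (map_poly \<iota> u)" by (rule root_distance)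
  finally show ?thesis .
qed

lemma disp_linear_factor_times_u_ge_1:
  assumes "0 \<le> disp \<alpha> (map_poly \<iota> v)"
    and SW: "\<forall>i<degree L. shiftS L (W i) =
               (\<Sum>j<degree L. smult (to_fract (M i j) / to_fract e) (W j))"
    and LIB: "\<And>m. m \<le> k \<Longrightarrow> local_integral_basis \<iota> L (\<alpha> + of_int m) W"
    and e_roots: "\<And>m. ev (\<alpha> + of_int m) e = 0 \<Longrightarrow> m = k"
  shows "1 \<le> disp \<alpha> ([:- (\<alpha> + of_int k), 1:] * map_poly \<iota> u)"
proof -
  obtain lo hi where lo: "ev (\<alpha> + of_int lo) v = 0" and hi: "ev (\<alpha> + of_int hi) v = 0"
    and span: "\<And>m. ev (\<alpha> + of_int m) v = 0 \<Longrightarrow> lo \<le> m \<and> m \<le> hi"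
    using int_root_extremes_of_v[OF assms(1)] by blast
  obtain m where m: "ev (\<alpha> + of_int m) u = 0" "m \<noteq> k"
  proof (cases "lo \<le> k")
    case True
    have "ev (\<alpha> + of_int (lo - 1)) u = 0"
      using span[of "lo - 1"] lo True LIB[of "lo - 1"] LIB[of lo]
      by (intro root_of_u_before_roots_of_v) (auto simp: algebra_simps)
    then show ?thesis using that[of "lo - 1"] True by simp
  next
    case False
    have "ev (\<alpha> + of_int hi) u = 0"
      using span[of "hi + 1"] hi span[OF lo] False e_roots[of hi]
      by (intro root_of_u_at_last_root_of_v_companion[OF _ _ _ SW]) (auto simp: algebra_simps)
    then show ?thesis using that False span[OF lo] by simp
  qed
  show ?thesis
    by (rule disp_ge_1_if_two_int_roots[of _ \<alpha> k m]) (use m in \<open>simp_all add: algebra_simps\<close>)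
qed

end

theorem mainTheorem3:
  fixes \<iota> :: "'c::{field_char_0,field_gcd} \<Rightarrow> 'k::field_char_0"
    and L :: "'c poly poly"
    and W :: "nat \<Rightarrow> 'c poly fract poly"
    and a b :: "nat \<Rightarrow> 'c poly"
    and u v :: "'c poly"
    and \<alpha> :: 'k
  assumes clos: "is_alg_closure \<iota>"
    and L0: "coeff L 0 \<noteq> 0" and Lr: "lead_coeff L \<noteq> 0"
    and basis: "is_basis_A L W"
    and u0: "u \<noteq> 0" and v0: "v \<noteq> 0"
    and gcd_u: "Gcd (insert u (a ` {..<degree L})) = 1"
    and gcd_v: "Gcd (insert v (b ` {..<degree L})) = 1"
    and tele: "fracW (degree L) W a u = DeltaA L (fracW (degree L) W b v)"
    and dispv: "disp \<alpha> (map_poly \<iota> v) \<ge> 0"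
  shows "((\<forall>m::int. local_integral_basis \<iota> L (\<alpha> + of_int m) W) \<longrightarrow>
            disp \<alpha> (map_poly \<iota> u) \<ge> disp \<alpha> (map_poly \<iota> v) + 1)
       \<and> (\<forall>(e :: 'c poly) (M :: nat \<Rightarrow> nat \<Rightarrow> 'c poly) (\<beta> :: 'k).
            e \<noteq> 0 \<longrightarrow>
            (\<forall>i<degree L. shiftS L (W i) =
                 (\<Sum>j<degree L. smult (to_fract (M i j) / to_fract e) (W j))) \<longrightarrow>
            (\<exists>k::int. \<beta> = \<alpha> + of_int k) \<longrightarrow>
            (\<forall>\<eta>\<in>{\<eta>. (\<exists>m::int. \<eta> = \<alpha> + of_int m) \<and> (\<exists>j::nat. \<beta> - \<eta> = of_nat j)}.
                 local_integral_basis \<iota> L \<eta> W) \<longrightarrow>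
            (\<forall>m::int. poly (map_poly \<iota> e) (\<alpha> + of_int m) = 0 \<longrightarrow> \<alpha> + of_int m = \<beta>) \<longrightarrow>
            disp \<alpha> ([:- \<beta>, 1:] * map_poly \<iota> u) \<ge> 1)"
proof (intro conjI impI allI)
  interpret telescoping \<iota> L W a b u v
    using field_embedding_if_alg_closure[OF clos] basis v0 gcd_v tele
    by (simp add: telescoping_def telescoping_axioms_def)
  show "disp \<alpha> (map_poly \<iota> v) + 1 \<le> disp \<alpha> (map_poly \<iota> u)"
    if "\<forall>m::int. local_integral_basis \<iota> L (\<alpha> + of_int m) W"
    using disp_u_ge_disp_v_plus_1[OF dispv] that by blast
  fix e :: "'c poly" and M :: "nat \<Rightarrow> nat \<Rightarrow> 'c poly" and \<beta> :: 'k
  assume SW: "\<forall>i<degree L. shiftS L (W i) =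
                (\<Sum>j<degree L. smult (to_fract (M i j) / to_fract e) (W j))"
    and "\<exists>k::int. \<beta> = \<alpha> + of_int k"
    and LIB: "\<forall>\<eta>\<in>{\<eta>. (\<exists>m::int. \<eta> = \<alpha> + of_int m) \<and> (\<exists>j::nat. \<beta> - \<eta> = of_nat j)}.
                local_integral_basis \<iota> L \<eta> W"
    and e_roots: "\<forall>m::int. poly (map_poly \<iota> e) (\<alpha> + of_int m) = 0 \<longrightarrow> \<alpha> + of_int m = \<beta>"
  then obtain k where k: "\<beta> = \<alpha> + of_int k" by blast
  have "local_integral_basis \<iota> L (\<alpha> + of_int m) W" if "m \<le> k" for m
  proof -
    have "\<beta> - (\<alpha> + of_int m) = of_nat (nat (k - m))" using that by (simp add: k of_nat_nat)
    then show ?thesis using LIB by blast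
  qed
  moreover have "m = k" if "ev (\<alpha> + of_int m) e = 0" for m
    using e_roots that by (simp add: k)
  ultimately show "1 \<le> disp \<alpha> ([:- \<beta>, 1:] * map_poly \<iota> u)"
    unfolding k using disp_linear_factor_times_u_ge_1[OF dispv SW] by blast
qed

end
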